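(* Let $k<n$ be positive integers and let $\mathcal{C}\subseteq\mathbb{F}_{q^m}^n$ be an $[n,k]$ linear code with a systematic generator matrix $G=[I_k\,|\,A]$, where $A\in\mathcal{M}_{k,n-k}(\mathbb{F}_{q^m})$. Let $\mathcal{S}=\{A_{ij}:1\le i\le k,\ 1\le j\le n-k\}$. Then: (1) If $\mathcal{S}\subseteq\mathbb{F}_q$, then every $\mathbb{F}_q$-linear automorphism $\varphi$ of $\mathbb{F}_{q^m}$ satisfies $\varphi(\mathcal{C})=\mathcal{C}$; in particular $\varphi$ is linear on $\mathcal{C}$. (2) If some $\alpha\in\mathcal{S}$ is a polynomial element of $\mathbb{F}_{q^m}$ over $\mathbb{F}_q$, then an $\mathbb{F}_q$-linear automorphism $\varphi$ of $\mathbb{F}_{q^m}$ is fully linear over $\mathbb{F}_{q^m}$ if and only if $\varphi$ is linear on $\mathcal{C}$.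
   Context: $q$ is a prime power (the paper takes $q$ a power of $2$). $I_k$ is the $k\times k$ identity matrix. An element $\alpha\in\mathbb{F}_{q^m}$ is a polynomial element over $\mathbb{F}_q$ if $1,\alpha,\dots,\alpha^{m-1}$ form an $\mathbb{F}_q$-basis of $\mathbb{F}_{q^m}$. An $\mathbb{F}_q$-linear automorphism of $\mathbb{F}_{q^m}$ is a bijective $\mathbb{F}_q$-linear map $\varphi:\mathbb{F}_{q^m}\to\mathbb{F}_{q^m}$, applied componentwise to vectors, with $\varphi(\mathcal{V})=\{\varphi(\bm{v}):\bm{v}\in\mathcal{V}\}$. $\varphi$ is linear on an $\mathbb{F}_{q^m}$-linear code $\mathcal{C}$ if $\varphi(\mathcal{C})$ is an $\mathbb{F}_{q^m}$-linear subspace; $\varphi$ is fully linear over $\mathbb{F}_{q^m}$ if it is linear on every $\mathbb{F}_{q^m}$-linear code of every length. *)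

theory Defs
  imports Main
begin

text \<open>The big field F_{q^m} is a finite field type 'a; F_q is a subfield K of it.\<close>

definition is_subfield :: "'a::field set \<Rightarrow> bool" where
  "is_subfield K \<longleftrightarrow> 0 \<in> K \<and> 1 \<in> K \<and> (\<forall>x\<in>K. \<forall>y\<in>K. x + y \<in> K \<and> x * y \<in> K)
     \<and> (\<forall>x\<in>K. - x \<in> K) \<and> (\<forall>x\<in>K. x \<noteq> 0 \<longrightarrow> inverse x \<in> K)"

definition Fq_linear_aut :: "'a::field set \<Rightarrow> ('a \<Rightarrow> 'a) \<Rightarrow> bool" where
  "Fq_linear_aut K \<phi> \<longleftrightarrow> bij \<phi> \<and> (\<forall>x y. \<phi> (x + y) = \<phi> x + \<phi> y)
     \<and> (\<forall>c\<in>K. \<forall>x. \<phi> (c * x) = c * \<phi> x)"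

definition polynomial_element :: "'a::field set \<Rightarrow> nat \<Rightarrow> 'a \<Rightarrow> bool" where
  "polynomial_element K m \<alpha> \<longleftrightarrow>
     (\<forall>c. (\<forall>i<m. c i \<in> K) \<and> (\<Sum>i<m. c i * \<alpha> ^ i) = 0 \<longrightarrow> (\<forall>i<m. c i = 0)) \<and>
     (\<forall>x. \<exists>c. (\<forall>i<m. c i \<in> K) \<and> x = (\<Sum>i<m. c i * \<alpha> ^ i))"

definition linear_code :: "nat \<Rightarrow> 'a::field list set \<Rightarrow> bool" where
  "linear_code N V \<longleftrightarrow> V \<subseteq> {v. length v = N} \<and> replicate N 0 \<in> V
     \<and> (\<forall>u\<in>V. \<forall>v\<in>V. map2 (+) u v \<in> V) \<and> (\<forall>c. \<forall>v\<in>V. map ((*) c) v \<in> V)"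

definition apply_aut :: "('a \<Rightarrow> 'a) \<Rightarrow> 'a list set \<Rightarrow> 'a list set" where
  "apply_aut \<phi> V = map \<phi> ` V"

definition linear_on :: "nat \<Rightarrow> ('a::field \<Rightarrow> 'a) \<Rightarrow> 'a list set \<Rightarrow> bool" where
  "linear_on N \<phi> C \<longleftrightarrow> linear_code N (apply_aut \<phi> C)"

definition fully_linear :: "('a::field \<Rightarrow> 'a) \<Rightarrow> bool" where
  "fully_linear \<phi> \<longleftrightarrow> (\<forall>N V. linear_code N V \<longrightarrow> linear_on N \<phi> V)"

text \<open>Row space of the systematic generator matrix [I_k | A], A indexed 0-based (i<k, j<n-k).\<close>
definition systematic_code :: "nat \<Rightarrow> nat \<Rightarrow> (nat \<Rightarrow> nat \<Rightarrow> 'a::field) \<Rightarrow> 'a list set" where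
  "systematic_code k n A =
     {x @ map (\<lambda>j. \<Sum>i<k. x ! i * A i j) [0..<n-k] | x. length x = k}"

end

theory Submission
  imports Defs
begin

text \<open>
  (1) The code is cut out by the parity equations \<open>v\<^bsub>k+j\<^esub> = \<Sum>\<^sub>i v\<^sub>i A\<^sub>i\<^sub>j\<close>; when all \<open>A\<^sub>i\<^sub>j\<close> lie in
  \<open>F\<^sub>q\<close> these are \<open>F\<^sub>q\<close>-linear, so they are preserved by \<open>\<phi>\<close> and by \<open>\<phi>\<^sup>-\<^sup>1\<close>.
  (2) If \<open>\<phi>(C)\<close> is closed under scalars, scaling \<open>\<phi>\<close> of the \<open>i\<close>-th row of \<open>[I\<^sub>k | A]\<close>
  by \<open>\<phi>(\<mu>)/\<phi>(1)\<close> gives \<open>\<phi>\<close> of the codeword with information part \<open>\<mu> e\<^sub>i\<close>; comparing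
  the coordinate of \<open>A\<^sub>i\<^sub>j = \<alpha>\<close> yields \<open>\<phi>(\<mu>\<alpha>) \<phi>(1) = \<phi>(\<mu>) \<phi>(\<alpha>)\<close>. Iterating over powers of
  \<open>\<alpha>\<close>, which span the field over \<open>F\<^sub>q\<close>, shows that \<open>\<phi>/\<phi>(1)\<close> is multiplicative, and then
  \<open>\<phi>\<close> maps every subspace over the big field to one.
\<close>

lemma systematic_code_iff:
  assumes "k \<le> n"
  shows "v \<in> systematic_code k n A \<longleftrightarrow>
           length v = n \<and> (\<forall>j<n-k. v ! (k+j) = (\<Sum>i<k. v ! i * A i j))"
proof
  assume "v \<in> systematic_code k n A"
  then obtain x where "length x = k" "v = x @ map (\<lambda>j. \<Sum>i<k. x ! i * A i j) [0..<n-k]"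
    unfolding systematic_code_def by blast
  then show "length v = n \<and> (\<forall>j<n-k. v ! (k+j) = (\<Sum>i<k. v ! i * A i j))"
    using assms by (auto simp: nth_append)
next
  assume v: "length v = n \<and> (\<forall>j<n-k. v ! (k+j) = (\<Sum>i<k. v ! i * A i j))"
  have "drop k v = map (\<lambda>j. \<Sum>i<k. take k v ! i * A i j) [0..<n-k]"
    by (rule nth_equalityI) (use v assms in auto)
  then have "v = take k v @ map (\<lambda>j. \<Sum>i<k. take k v ! i * A i j) [0..<n-k]"
    by (metis append_take_drop_id)
  moreover have "length (take k v) = k" using v assms by simp
  ultimately show "v \<in> systematic_code k n A" unfolding systematic_code_def by blast
qed

lemma linear_code_systematic_code:
  assumes "k \<le> n"
  shows "linear_code n (systematic_code k n A)"
  unfolding linear_code_def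
proof (intro conjI ballI allI)
  show "systematic_code k n A \<subseteq> {v. length v = n}"
    using systematic_code_iff[OF assms] by auto
  show "replicate n 0 \<in> systematic_code k n A"
    by (simp add: systematic_code_iff[OF assms])
  show "map2 (+) u v \<in> systematic_code k n A"
    if "u \<in> systematic_code k n A" "v \<in> systematic_code k n A" for u v
    using that assms by (auto simp: systematic_code_iff[OF assms] sum.distrib distrib_right)
  show "map ((*) c) v \<in> systematic_code k n A" if "v \<in> systematic_code k n A" for c v
    using that assms by (auto simp: systematic_code_iff[OF assms] sum_distrib_left mult.assoc)
qed

context
  fixes K :: "'a::field set" and \<phi> :: "'a \<Rightarrow> 'a"
  assumes aut: "Fq_linear_aut K \<phi>"
begin

lemma Fq_linear_aut_add: "\<phi> (x + y) = \<phi> x + \<phi> y"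
  using aut unfolding Fq_linear_aut_def by blast

lemma Fq_linear_aut_smult: "c \<in> K \<Longrightarrow> \<phi> (c * x) = c * \<phi> x"
  using aut unfolding Fq_linear_aut_def by blast

lemma Fq_linear_aut_eq_iff: "\<phi> x = \<phi> y \<longleftrightarrow> x = y"
  using aut unfolding Fq_linear_aut_def by (auto simp: bij_def inj_eq)

lemma Fq_linear_aut_inv_apply: "\<phi> (inv \<phi> x) = x"
  using aut unfolding Fq_linear_aut_def by (simp add: bij_def surj_f_inv_f)

lemma Fq_linear_aut_zero: "\<phi> 0 = 0"
  using Fq_linear_aut_add[of 0 0] by (metis add.right_neutral add_left_cancel)

lemma Fq_linear_aut_eq_0_iff: "\<phi> x = 0 \<longleftrightarrow> x = 0"
  using Fq_linear_aut_eq_iff[of x 0] by (simp add: Fq_linear_aut_zero)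

lemma Fq_linear_aut_sum: "\<phi> (sum f I) = (\<Sum>i\<in>I. \<phi> (f i))"
  by (induction I rule: infinite_finite_induct) (auto simp: Fq_linear_aut_zero Fq_linear_aut_add)

lemma Fq_linear_aut_inv: "Fq_linear_aut K (inv \<phi>)"
proof -
  have "inv \<phi> (x + y) = inv \<phi> x + inv \<phi> y" for x y
    by (simp add: Fq_linear_aut_eq_iff[symmetric] Fq_linear_aut_add Fq_linear_aut_inv_apply)
  moreover have "inv \<phi> (c * x) = c * inv \<phi> x" if "c \<in> K" for c x
    using that
    by (simp add: Fq_linear_aut_eq_iff[symmetric] Fq_linear_aut_smult Fq_linear_aut_inv_apply)
  ultimately show ?thesis
    using aut bij_imp_bij_inv unfolding Fq_linear_aut_def by blast
qed

lemma map_Fq_linear_aut_systematic_code: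
  assumes kn: "k \<le> n" and AK: "\<forall>i<k. \<forall>j<n-k. A i j \<in> K"
    and v: "v \<in> systematic_code k n A"
  shows "map \<phi> v \<in> systematic_code k n A"
proof -
  have len: "length v = n" and parity: "\<forall>j<n-k. v ! (k+j) = (\<Sum>i<k. v ! i * A i j)"
    using v systematic_code_iff[OF kn] by auto
  have "map \<phi> v ! (k+j) = (\<Sum>i<k. map \<phi> v ! i * A i j)" if j: "j < n-k" for j
  proof -
    have "map \<phi> v ! (k+j) = (\<Sum>i<k. \<phi> (A i j * v ! i))"
      using len parity j by (simp add: Fq_linear_aut_sum mult.commute)
    also have "\<dots> = (\<Sum>i<k. map \<phi> v ! i * A i j)"
      using AK j len kn by (intro sum.cong) (auto simp: Fq_linear_aut_smult mult.commute)
    finally show ?thesis .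
  qed
  then show ?thesis using len by (simp add: systematic_code_iff[OF kn])
qed

end

lemma apply_aut_systematic_code:
  assumes aut: "Fq_linear_aut K \<phi>" and kn: "k \<le> n" and AK: "\<forall>i<k. \<forall>j<n-k. A i j \<in> K"
  shows "apply_aut \<phi> (systematic_code k n A) = systematic_code k n A"
proof
  show "apply_aut \<phi> (systematic_code k n A) \<subseteq> systematic_code k n A"
    unfolding apply_aut_def using map_Fq_linear_aut_systematic_code[OF aut kn AK] by blast
  show "systematic_code k n A \<subseteq> apply_aut \<phi> (systematic_code k n A)"
  proof
    fix v assume "v \<in> systematic_code k n A"
    then have "map (inv \<phi>) v \<in> systematic_code k n A"
      by (rule map_Fq_linear_aut_systematic_code[OF Fq_linear_aut_inv[OF aut] kn AK])
    moreover have "v = map \<phi> (map (inv \<phi>) v)"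
      by (simp add: Fq_linear_aut_inv_apply[OF aut] map_idI)
    ultimately show "v \<in> apply_aut \<phi> (systematic_code k n A)"
      unfolding apply_aut_def by blast
  qed
qed

context
  fixes K :: "'a::field set" and \<phi> :: "'a \<Rightarrow> 'a"
  assumes aut: "Fq_linear_aut K \<phi>"
begin

lemma linear_on_systematic_code_mult_entry:
  assumes kn: "k \<le> n" and i: "i < k" and j: "j < n - k"
    and lin: "linear_on n \<phi> (systematic_code k n A)"
  shows "\<phi> (\<mu> * A i j) * \<phi> 1 = \<phi> \<mu> * \<phi> (A i j)"
proof -
  define row where "row = map (\<lambda>l. if l < k then (if l = i then 1 else 0) else A i (l - k)) [0..<n]"
  have "(\<Sum>l<k. row ! l * A l j') = A i j'" if "j' < n - k" for j'
  proof -
    have "(\<Sum>l<k. row ! l * A l j') = (\<Sum>l<k. if l = i then A i j' else 0)"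
      using kn by (intro sum.cong) (auto simp: row_def)
    then show ?thesis using i by simp
  qed
  then have "row \<in> systematic_code k n A"
    by (simp add: systematic_code_iff[OF kn] row_def)
  moreover define c where "c = \<phi> \<mu> / \<phi> 1"
  ultimately have "map ((*) c) (map \<phi> row) \<in> map \<phi> ` systematic_code k n A"
    using lin unfolding linear_on_def linear_code_def apply_aut_def by blast
  then obtain u where u: "u \<in> systematic_code k n A" and scaled: "map ((*) c) (map \<phi> row) = map \<phi> u"
    by blast
  have len: "length u = n" and parity: "u ! (k+j) = (\<Sum>l<k. u ! l * A l j)"
    using u j systematic_code_iff[OF kn] by auto
  have coord: "\<phi> (u ! l) = c * \<phi> (row ! l)" if "l < n" for l
  proof -
    have "length row = n" by (simp add: row_def)
    then show ?thesis using arg_cong[OF scaled, of "\<lambda>xs. xs ! l"] that len by simp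
  qed
  have phi1: "\<phi> 1 \<noteq> 0" by (simp add: Fq_linear_aut_eq_0_iff[OF aut])
  have info: "u ! l = (if l = i then \<mu> else 0)" if "l < k" for l
    using coord[of l] that kn phi1
    by (auto simp: row_def c_def Fq_linear_aut_zero[OF aut] Fq_linear_aut_eq_iff[OF aut]
        Fq_linear_aut_eq_0_iff[OF aut])
  have "(\<Sum>l<k. u ! l * A l j) = (\<Sum>l<k. if l = i then \<mu> * A i j else 0)"
    using info by (intro sum.cong) auto
  then have "u ! (k+j) = \<mu> * A i j"
    using parity i by simp
  then have "\<phi> (\<mu> * A i j) = c * \<phi> (A i j)"
    using coord[of "k+j"] j by (simp add: row_def)
  then show ?thesis using phi1 by (simp add: c_def)
qed

lemma mult_power_from_mult_generator:
  assumes gen: "\<forall>\<mu>. \<phi> (\<mu> * \<alpha>) * \<phi> 1 = \<phi> \<mu> * \<phi> \<alpha>"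
  shows "\<phi> (x * \<alpha> ^ t) * \<phi> 1 ^ t = \<phi> x * \<phi> \<alpha> ^ t"
proof (induction t)
  case 0
  then show ?case by simp
next
  case (Suc t)
  have "\<phi> (x * \<alpha> ^ Suc t) * \<phi> 1 ^ Suc t = (\<phi> ((x * \<alpha> ^ t) * \<alpha>) * \<phi> 1) * \<phi> 1 ^ t"
    by (simp add: mult_ac)
  also have "\<dots> = \<phi> (x * \<alpha> ^ t) * \<phi> 1 ^ t * \<phi> \<alpha>"
    using gen[rule_format, of "x * \<alpha> ^ t"] by (simp add: mult_ac)
  also have "\<dots> = \<phi> x * \<phi> \<alpha> ^ Suc t"
    using Suc by (simp add: mult_ac)
  finally show ?case .
qed

lemma mult_from_mult_generator:
  assumes gen: "\<forall>\<mu>. \<phi> (\<mu> * \<alpha>) * \<phi> 1 = \<phi> \<mu> * \<phi> \<alpha>"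
    and span: "\<forall>t<m. d t \<in> K" "y = (\<Sum>t<m. d t * \<alpha> ^ t)"
  shows "\<phi> (x * y) * \<phi> 1 = \<phi> x * \<phi> y"
proof -
  define c where "c = \<phi> 1"
  have "c \<noteq> 0" by (simp add: c_def Fq_linear_aut_eq_0_iff[OF aut])
  then have power: "\<phi> (z * \<alpha> ^ t) = \<phi> z * (\<phi> \<alpha> / c) ^ t" for z t
    using mult_power_from_mult_generator[OF gen, of z t]
    by (simp add: c_def[symmetric] power_divide field_simps)
  define T where "T = (\<Sum>t<m. d t * (\<phi> \<alpha> / c) ^ t)"
  have times_y: "\<phi> (z * y) = \<phi> z * T" for z
  proof -
    have "\<phi> (z * y) = (\<Sum>t<m. \<phi> (d t * (z * \<alpha> ^ t)))"
      by (simp add: span(2) sum_distrib_left Fq_linear_aut_sum[OF aut] mult_ac)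
    also have "\<dots> = (\<Sum>t<m. d t * (\<phi> z * (\<phi> \<alpha> / c) ^ t))"
      using span(1) by (intro sum.cong) (auto simp: Fq_linear_aut_smult[OF aut] power)
    also have "\<dots> = \<phi> z * T" by (simp add: T_def sum_distrib_left mult_ac)
    finally show ?thesis .
  qed
  show ?thesis using times_y[of x] times_y[of 1] by (simp add: c_def mult_ac)
qed

lemma fully_linear_if_mult:
  assumes mult: "\<And>x y. \<phi> (x * y) * \<phi> 1 = \<phi> x * \<phi> y"
  shows "fully_linear \<phi>"
  unfolding fully_linear_def linear_on_def
proof (intro allI impI)
  fix N and V :: "'a list set"
  assume V: "linear_code N V"
  show "linear_code N (apply_aut \<phi> V)"
    unfolding linear_code_def apply_aut_def
  proof (intro conjI ballI allI)
    show "map \<phi> ` V \<subseteq> {v. length v = N}" using V unfolding linear_code_def by auto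
    have "replicate N 0 = map \<phi> (replicate N 0)" by (simp add: Fq_linear_aut_zero[OF aut])
    then show "replicate N 0 \<in> map \<phi> ` V" using V unfolding linear_code_def by blast
  next
    fix a b assume "a \<in> map \<phi> ` V" "b \<in> map \<phi> ` V"
    then obtain u v where uv: "u \<in> V" "v \<in> V" "a = map \<phi> u" "b = map \<phi> v" by blast
    have "map2 (+) a b = map \<phi> (map2 (+) u v)"
      by (simp add: uv zip_map_map Fq_linear_aut_add[OF aut] case_prod_beta)
    then show "map2 (+) a b \<in> map \<phi> ` V" using V uv unfolding linear_code_def by blast
  next
    fix c a assume "a \<in> map \<phi> ` V"
    then obtain v where v: "v \<in> V" "a = map \<phi> v" by blast
    define \<mu> where "\<mu> = inv \<phi> (c * \<phi> 1)"
    have "\<phi> 1 \<noteq> 0" by (simp add: Fq_linear_aut_eq_0_iff[OF aut])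
    then have "\<phi> (\<mu> * x) = c * \<phi> x" for x
      using mult[of \<mu> x] by (simp add: \<mu>_def Fq_linear_aut_inv_apply[OF aut] mult_ac)
    then have "map ((*) c) a = map \<phi> (map ((*) \<mu>) v)" by (simp add: v)
    then show "map ((*) c) a \<in> map \<phi> ` V" using V v unfolding linear_code_def by blast
  qed
qed

end

theorem theorem1:
  fixes K :: "'a::{field,finite} set" and q m k n :: nat
    and A :: "nat \<Rightarrow> nat \<Rightarrow> 'a" and C :: "'a list set"
  assumes "is_subfield K" and "card K = q" and "m > 0" and "card (UNIV :: 'a set) = q ^ m"
    and "0 < k" and "k < n"
    and "C = systematic_code k n A"
  defines "S \<equiv> {A i j | i j. i < k \<and> j < n - k}"
  shows "(S \<subseteq> K \<longrightarrow> (\<forall>\<phi>. Fq_linear_aut K \<phi> \<longrightarrow> apply_aut \<phi> C = C \<and> linear_on n \<phi> C))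
       \<and> ((\<exists>\<alpha>\<in>S. polynomial_element K m \<alpha>) \<longrightarrow>
           (\<forall>\<phi>. Fq_linear_aut K \<phi> \<longrightarrow> (fully_linear \<phi> \<longleftrightarrow> linear_on n \<phi> C)))"
proof -
  have kn: "k \<le> n" using \<open>k < n\<close> by simp
  have code: "linear_code n C" using linear_code_systematic_code[OF kn] \<open>C = _\<close> by simp
  show ?thesis
  proof (rule conjI; intro impI allI)
    fix \<phi> assume "S \<subseteq> K" and aut: "Fq_linear_aut K \<phi>"
    from \<open>S \<subseteq> K\<close> have "\<forall>i<k. \<forall>j<n-k. A i j \<in> K" unfolding S_def by blast
    then show "apply_aut \<phi> C = C \<and> linear_on n \<phi> C"
      using apply_aut_systematic_code[OF aut kn] code \<open>C = _\<close> unfolding linear_on_def by simp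
  next
    fix \<phi> assume "\<exists>\<alpha>\<in>S. polynomial_element K m \<alpha>" and aut: "Fq_linear_aut K \<phi>"
    from \<open>\<exists>\<alpha>\<in>S. _\<close> obtain i j where ij: "i < k" "j < n - k" and pe: "polynomial_element K m (A i j)"
      unfolding S_def by blast
    show "fully_linear \<phi> \<longleftrightarrow> linear_on n \<phi> C"
    proof
      assume "fully_linear \<phi>"
      then show "linear_on n \<phi> C" using code unfolding fully_linear_def by blast
    next
      assume "linear_on n \<phi> C"
      then have gen: "\<forall>\<mu>. \<phi> (\<mu> * A i j) * \<phi> 1 = \<phi> \<mu> * \<phi> (A i j)"
        using linear_on_systematic_code_mult_entry[OF aut kn ij] \<open>C = _\<close> by simp
      have "\<phi> (x * y) * \<phi> 1 = \<phi> x * \<phi> y" for x y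
      proof -
        obtain d where "\<forall>t<m. d t \<in> K" "y = (\<Sum>t<m. d t * A i j ^ t)"
          using pe unfolding polynomial_element_def by blast
        then show ?thesis by (rule mult_from_mult_generator[OF aut gen])
      qed
      then show "fully_linear \<phi>" by (rule fully_linear_if_mult[OF aut])
    qed
  qed
qed

end
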